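(* Let $k\ge 1$ and let $\pi$ be a feasible signature of a $k$-move. Then there is a subset $E_\pi\subseteq\{e_1,\ldots,e_k\}$ of the removed edges with $|E_\pi|\ge\lceil k/3\rceil$ whose edges are pairwise non-interfering.
   Context: Consider a tour $T$ (Hamiltonian cycle) in a complete graph and a $k$-move that removes edges $e_1,\ldots,e_k$ of $T$ and inserts $k$ edges $f_1,\ldots,f_k$ so that the result is a tour. Write $e_i=\{v_{2i-1},v_{2i}\}$, where the vertices $v_1,\ldots,v_{2k}$ are pairwise distinct and indexed in the order in which $T$ traverses them. The signature of the move is the permutation $\pi$ of $\{1,\ldots,2k\}$ such that $v_j$ and $v_{\pi(j)}$ are the two endpoints of one of the inserted edges $f_1,\ldots,f_k$; a signature is feasible if it arises from some $k$-move (so $\pi(\pi(j))=j$, $\pi(j)\ne j$, and removing the $e_i$ and inserting the $f_i$ yields a single Hamiltonian cycle). Two removed edges $e_i,e_j$ ($i\ne j$) interfere if some inserted edge connects an endpoint of $e_i$ to an endpoint of $e_j$ (equivalently, $\pi(\{2i-1,2i\})\cap\{2j-1,2j\}\neq\emptyset$); otherwise they are non-interfering. *)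

theory Defs
  imports "HOL-Combinatorics.Permutations" Complex_Main
begin

text \<open>WLOG the tour T on the complete graph with vertex set {0..<n} is 0,1,...,n-1,0.
Edges are 2-element sets of vertices.\<close>

definition tour_edges :: "nat \<Rightarrow> nat set set" where
  "tour_edges n = {{i, (i + 1) mod n} | i. i < n}"

definition is_tour :: "nat \<Rightarrow> nat set set \<Rightarrow> bool" where
  "is_tour n H \<longleftrightarrow> n \<ge> 3 \<and>
     (\<exists>\<sigma>. bij_betw \<sigma> {..<n} {..<n} \<and> H = {{\<sigma> i, \<sigma> ((i + 1) mod n)} | i. i < n})"

text \<open>A k-move on the tour 0,...,n-1: vertices v_j = p j (j = 1..2k) in traversal order,
removed edges e_i = {p(2i-1), p(2i)} (tour edges), inserted edges {p j, p (\<pi> j)}.\<close>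
definition removed_edges :: "nat \<Rightarrow> (nat \<Rightarrow> nat) \<Rightarrow> nat set set" where
  "removed_edges k p = {{p (2*i - 1), p (2*i)} | i. i \<in> {1..k}}"

definition inserted_edges :: "nat \<Rightarrow> (nat \<Rightarrow> nat) \<Rightarrow> (nat \<Rightarrow> nat) \<Rightarrow> nat set set" where
  "inserted_edges k p \<pi> = {{p j, p (\<pi> j)} | j. j \<in> {1..2*k}}"

definition is_kmove :: "nat \<Rightarrow> nat \<Rightarrow> (nat \<Rightarrow> nat) \<Rightarrow> (nat \<Rightarrow> nat) \<Rightarrow> bool" where
  "is_kmove n k p \<pi> \<longleftrightarrow>
     strict_mono_on {1..2*k} p \<and> (\<forall>j\<in>{1..2*k}. p j < n) \<and>
     (\<forall>i\<in>{1..k}. p (2*i) = Suc (p (2*i - 1))) \<and>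
     \<pi> permutes {1..2*k} \<and> (\<forall>j\<in>{1..2*k}. \<pi> j \<noteq> j \<and> \<pi> (\<pi> j) = j) \<and>
     card (inserted_edges k p \<pi>) = k \<and>
     is_tour n ((tour_edges n - removed_edges k p) \<union> inserted_edges k p \<pi>)"

definition feasible_signature :: "nat \<Rightarrow> (nat \<Rightarrow> nat) \<Rightarrow> bool" where
  "feasible_signature k \<pi> \<longleftrightarrow> (\<exists>n p. is_kmove n k p \<pi>)"

definition interfere :: "(nat \<Rightarrow> nat) \<Rightarrow> nat \<Rightarrow> nat \<Rightarrow> bool" where
  "interfere \<pi> i j \<longleftrightarrow> i \<noteq> j \<and> \<pi> ` {2*i - 1, 2*i} \<inter> {2*j - 1, 2*j} \<noteq> {}"

end

theory Submission
  imports Defs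
begin

text \<open>Every removed edge has two endpoints, each matched by \<pi> to a single endpoint of some
  removed edge, so it interferes with at most two others: the interference graph has maximum
  degree 2. Greedily picking a vertex and discarding its neighbours therefore yields an
  independent set containing at least a third of the vertices.\<close>

lemma independent_subset_if_degree_le:
  fixes V :: "'a set" and R :: "'a \<Rightarrow> 'a \<Rightarrow> bool"
  assumes "finite V"
    and "\<And>i j. i \<in> V \<Longrightarrow> j \<in> V \<Longrightarrow> R i j \<Longrightarrow> R j i"
    and "\<And>i. i \<in> V \<Longrightarrow> card {j \<in> V. R i j} \<le> d"
  shows "\<exists>S \<subseteq> V. card V \<le> (d + 1) * card S \<and> (\<forall>i\<in>S. \<forall>j\<in>S. i \<noteq> j \<longrightarrow> \<not> R i j)"
  using assms
proof (induction V rule: finite_psubset_induct)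
  case (psubset V)
  note sym = psubset.prems(1) and degree = psubset.prems(2)
  show ?case
  proof (cases "V = {}")
    case True
    then show ?thesis by simp
  next
    case False
    then obtain v where v: "v \<in> V" by blast
    define N where "N = insert v {j \<in> V. R v j}"
    define V' where "V' = V - N"
    have "N \<subseteq> V" using v by (auto simp: N_def)
    then have "finite N" using psubset.hyps(1) by (rule finite_subset)
    have "card N \<le> d + 1"
      unfolding N_def by (rule card_insert_le_m1) (use degree[OF v] in simp_all)
    moreover have "card V' = card V - card N"
      unfolding V'_def using \<open>finite N\<close> \<open>N \<subseteq> V\<close> by (rule card_Diff_subset)
    ultimately have card_V: "card V \<le> card V' + (d + 1)" by linarith
    have "V' \<subset> V" using v by (auto simp: V'_def N_def)
    have sym': "\<And>i j. i \<in> V' \<Longrightarrow> j \<in> V' \<Longrightarrow> R i j \<Longrightarrow> R j i"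
      using sym unfolding V'_def by blast
    have degree': "card {j \<in> V'. R i j} \<le> d" if "i \<in> V'" for i
    proof -
      have "card {j \<in> V'. R i j} \<le> card {j \<in> V. R i j}"
        using psubset.hyps(1) by (intro card_mono) (auto simp: V'_def)
      also have "\<dots> \<le> d" using degree that by (simp add: V'_def)
      finally show ?thesis .
    qed
    obtain S where S: "S \<subseteq> V'" "card V' \<le> (d + 1) * card S"
      and indep: "\<forall>i\<in>S. \<forall>j\<in>S. i \<noteq> j \<longrightarrow> \<not> R i j"
      using psubset.IH[OF \<open>V' \<subset> V\<close> sym' degree'] by blast
    have "S \<subseteq> V" using S(1) \<open>V' \<subset> V\<close> by blast
    then have "finite S" using psubset.hyps(1) by (rule finite_subset)
    moreover have "v \<notin> S" using S(1) unfolding V'_def N_def by blast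
    moreover have "\<not> R v j \<and> \<not> R j v" if "j \<in> S" for j
    proof -
      have "j \<in> V" "j \<notin> N" using that S(1) by (auto simp: V'_def)
      then show ?thesis using v sym unfolding N_def by blast
    qed
    ultimately show ?thesis
      using S v card_V indep by (intro exI[of _ "insert v S"]) (auto simp: V'_def)
  qed
qed

lemma interfering_subset:
  "{j. interfere \<pi> i j} \<subseteq> (\<lambda>b. (b + 1) div 2) ` \<pi> ` {2*i - 1, 2*i}"
proof
  fix j assume "j \<in> {j. interfere \<pi> i j}"
  then obtain a where a: "a \<in> {2*i - 1, 2*i}" and \<pi>a: "\<pi> a \<in> {2*j - 1, 2*j}"
    unfolding interfere_def by blast
  from \<pi>a have "(\<pi> a + 1) div 2 = j" by auto
  with a show "j \<in> (\<lambda>b. (b + 1) div 2) ` \<pi> ` {2*i - 1, 2*i}" by blast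
qed

lemma finite_interfering: "finite {j. interfere \<pi> i j}"
  using interfering_subset by (rule finite_subset) simp

lemma card_interfering_le_2: "card {j. interfere \<pi> i j} \<le> 2"
proof -
  have "card {j. interfere \<pi> i j} \<le> card ((\<lambda>b. (b + 1) div 2) ` \<pi> ` {2*i - 1, 2*i})"
    by (intro card_mono interfering_subset) simp
  also have "\<dots> \<le> card (\<pi> ` {2*i - 1, 2*i})" by (rule card_image_le) simp
  also have "\<dots> \<le> card {2*i - 1, 2*i}" by (rule card_image_le) simp
  also have "\<dots> \<le> 2" by (simp add: card_insert_if)
  finally show ?thesis .
qed

lemma interfere_sym:
  assumes "\<forall>j\<in>{1..2*k}. \<pi> (\<pi> j) = j" and "i \<in> {1..k}" and "interfere \<pi> i j"
  shows "interfere \<pi> j i"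
proof -
  obtain a where a: "a \<in> {2*i - 1, 2*i}" and \<pi>a: "\<pi> a \<in> {2*j - 1, 2*j}" and "i \<noteq> j"
    using assms(3) unfolding interfere_def by blast
  have "a \<in> {1..2*k}" using assms(2) a by auto
  with assms(1) have "\<pi> (\<pi> a) = a" by blast
  with \<pi>a have "a \<in> \<pi> ` {2*j - 1, 2*j}" by (metis imageI)
  with a \<open>i \<noteq> j\<close> show ?thesis unfolding interfere_def by blast
qed

lemma feasible_signature_involution:
  assumes "feasible_signature k \<pi>"
  shows "\<forall>j\<in>{1..2*k}. \<pi> (\<pi> j) = j"
proof -
  obtain n p where "is_kmove n k p \<pi>"
    using assms unfolding feasible_signature_def by blast
  then have "\<forall>j\<in>{1..2*k}. \<pi> j \<noteq> j \<and> \<pi> (\<pi> j) = j"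
    unfolding is_kmove_def by (elim conjE) assumption
  then show ?thesis by blast
qed

lemma nat_ceiling_div_le:
  assumes "k \<le> m * s" and "0 < m"
  shows "nat \<lceil>real k / real m\<rceil> \<le> s"
proof -
  have "real k / real m \<le> real s"
    using assms by (simp add: divide_le_eq mult.commute flip: of_nat_mult)
  then show ?thesis by (simp add: ceiling_le_iff nat_le_iff)
qed

theorem lemma7:
  fixes k :: nat and \<pi> :: "nat \<Rightarrow> nat"
  assumes "k \<ge> 1" and "feasible_signature k \<pi>"
  shows "\<exists>S \<subseteq> {1..k}. card S \<ge> nat \<lceil>real k / 3\<rceil> \<and>
           (\<forall>i\<in>S. \<forall>j\<in>S. i \<noteq> j \<longrightarrow> \<not> interfere \<pi> i j)"
proof -
  have degree: "card {j \<in> {1..k}. interfere \<pi> i j} \<le> 2" for i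
    by (rule order_trans[OF card_mono[OF finite_interfering[of \<pi> i]] card_interfering_le_2])
      blast
  have sym: "interfere \<pi> j i" if "i \<in> {1..k}" "j \<in> {1..k}" "interfere \<pi> i j" for i j
    using interfere_sym[OF feasible_signature_involution[OF assms(2)] that(1,3)] .
  obtain S where "S \<subseteq> {1..k}" and "card {1..k} \<le> (2 + 1) * card S"
    and "\<forall>i\<in>S. \<forall>j\<in>S. i \<noteq> j \<longrightarrow> \<not> interfere \<pi> i j"
    using independent_subset_if_degree_le[of "{1..k}" "interfere \<pi>" 2, OF _ sym degree] by blast
  moreover have "nat \<lceil>real k / 3\<rceil> \<le> card S"
    using nat_ceiling_div_le[of k 3 "card S"] \<open>card {1..k} \<le> (2 + 1) * card S\<close> by simp
  ultimately show ?thesis by blast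
qed

end
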